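(* Let $\mathbb{K}$ be a field of characteristic zero containing all complex roots of unity and $q$ an indeterminate transcendental over $\mathbb{K}$. Let $f_n(q)$ be a $q$-holonomic sequence satisfying a recurrence $\sum_{j=0}^d c_j(q,q^n)f_{n+j}(q)=0$ for all $n\in\mathbb{N}$, with $c_j\in\mathbb{K}[u,v]$ and $c_d\neq0$ (order $d$). Then for $\alpha\in\mathbb{Q}$ with denominator $m\in\mathbb{N}$, the sequence $f_n(q^\alpha)$ is $q$-holonomic as well and satisfies a recurrence of this form of order at most $m^2\cdot d$.
   Context: A sequence $f_n(q)$ is $q$-holonomic if it satisfies a nontrivial linear recurrence $\sum_{j=0}^d c_j(q,q^n)f_{n+j}(q)=0$ for all $n\in\mathbb{N}$, with bivariate polynomials $c_j(u,v)\in\mathbb{K}[u,v]$ and $c_d\neq0$. *)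

theory Defs
  imports Complex_Main "HOL-Computational_Algebra.Polynomial" "HOL-Computational_Algebra.Fraction_Field"
begin

text \<open>The rational function field K(q) is modelled as the type 'k poly fract;
  the indeterminate of the polynomial ring plays the role of q (resp. of q^(1/m)).\<close>

definition ratfun_const :: "'k::field \<Rightarrow> 'k poly fract" where
  "ratfun_const k = Fract [:k:] 1"

definition qvar :: "'k::field poly fract" where
  "qvar = Fract [:0, 1:] 1"

definition ev_poly :: "'k::field poly \<Rightarrow> 'k poly fract \<Rightarrow> 'k poly fract" where
  "ev_poly p y = poly (map_poly ratfun_const p) y"

text \<open>Bivariate polynomials c(u,v) in K[u,v] are represented as 'k poly poly:
  polynomials in v whose coefficients are polynomials in u.  eval2 c x y = c(x,y).\<close>
definition eval2 :: "'k::field poly poly \<Rightarrow> 'k poly fract \<Rightarrow> 'k poly fract \<Rightarrow> 'k poly fract" where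
  "eval2 c x y = poly (map_poly (\<lambda>p. ev_poly p x) c) y"

definition subst_ratfun :: "'k::field poly fract \<Rightarrow> 'k poly fract \<Rightarrow> 'k poly fract" where
  "subst_ratfun f y =
     (let (p, r) = (SOME (p, r). r \<noteq> 0 \<and> f = Fract p r) in ev_poly p y / ev_poly r y)"

end

theory Submission
  imports Defs
begin

text \<open>
  Substituting \<open>q \<mapsto> q\<^sup>a\<close> (\<open>a \<noteq> 0\<close>) is an injective homomorphism of \<open>K(q)\<close>, so \<open>g\<^sub>n = f\<^sub>n(q\<^sup>a)\<close>
  satisfies the substituted recurrence, and multiplying by a power of \<open>q\<^sup>a\<close> makes its coefficients
  polynomials \<open>L\<^sub>j(q, q\<^sup>n)\<close>. Take unknown multipliers \<open>P\<^sub>i(u, v)\<close>, \<open>i \<le> e = (m\<^sup>2 - 1) d\<close>, of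
  bidegree below \<open>N\<close>: the combination \<open>\<Sum>\<^sub>i P\<^sub>i(q, q\<^sup>n) \<cdot> (recurrence at n + i)\<close> is a recurrence
  of order \<open>m\<^sup>2 d\<close> whose coefficients depend linearly on the \<open>P\<^sub>i\<close>. Requiring that only monomials
  \<open>u\<^sup>a v\<^sup>b\<close> with \<open>m\<close> dividing \<open>a\<close> and \<open>b\<close> occur is a homogeneous linear system; since only a
  fraction \<open>1 - 1/m\<^sup>2\<close> of the monomials in a box is forbidden, for large \<open>N\<close> there are fewer
  equations than unknowns, and a nonzero solution exists. The top coefficient
  \<open>P\<^sub>i\<^sub>0(u, v) L\<^sub>d(u, u\<^sup>i\<^sup>0 v)\<close> of the combination is nonzero, and all coefficients are
  polynomials in \<open>u\<^sup>m\<close>, \<open>v\<^sup>m\<close>, i.e. polynomials evaluated at \<open>(q\<^sup>m, q\<^sup>m\<^sup>n)\<close>.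
\<close>

section \<open>Evaluation homomorphisms\<close>

lemma poly_map_poly_add:
  assumes "h 0 = 0" "\<And>a b. h (a + b) = h a + h b"
  shows "poly (map_poly h (p + q)) y = poly (map_poly h p) y + poly (map_poly h q) y"
  by (induction p q rule: poly_induct2) (simp_all add: map_poly_pCons assms algebra_simps)

lemma poly_map_poly_mult:
  fixes h :: "'a::comm_semiring_1 \<Rightarrow> 'b::comm_semiring_1"
  assumes "h 0 = 0" "\<And>a b. h (a + b) = h a + h b" "\<And>a b. h (a * b) = h a * h b"
  shows "poly (map_poly h (p * q)) y = poly (map_poly h p) y * poly (map_poly h q) y"
proof (induction p)
  case (pCons a p)
  have "poly (map_poly h (smult a q)) y = h a * poly (map_poly h q) y"
    by (simp add: map_poly_smult assms)
  then show ?case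
    using pCons by (simp add: poly_map_poly_add[OF assms(1,2)] map_poly_pCons assms(1) algebra_simps)
qed (simp add: assms)

lemma ratfun_const_1 [simp]: "ratfun_const 1 = 1"
  by (simp add: ratfun_const_def One_fract_def flip: one_pCons)

lemma ratfun_const_add: "ratfun_const (a + b) = ratfun_const a + ratfun_const b"
  by (simp add: ratfun_const_def)

lemma ratfun_const_mult: "ratfun_const (a * b) = ratfun_const a * ratfun_const b"
  by (simp add: ratfun_const_def ac_simps)

lemma ratfun_const_eq_0_iff [simp]: "ratfun_const a = 0 \<longleftrightarrow> a = 0"
  by (simp add: ratfun_const_def Zero_fract_def eq_fract)

lemma ev_poly_0 [simp]: "ev_poly 0 y = 0"
  by (simp add: ev_poly_def)

lemma ev_poly_pCons: "ev_poly (pCons a p) y = ratfun_const a + y * ev_poly p y"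
  by (simp add: ev_poly_def map_poly_pCons)

lemma ev_poly_const [simp]: "ev_poly [:a:] y = ratfun_const a"
  by (simp add: ev_poly_pCons)

lemma ev_poly_1 [simp]: "ev_poly 1 y = 1"
  by (metis ev_poly_const one_pCons ratfun_const_1)

lemma ev_poly_add: "ev_poly (p + q) y = ev_poly p y + ev_poly q y"
  unfolding ev_poly_def by (rule poly_map_poly_add) (simp_all add: ratfun_const_add)

lemma ev_poly_mult: "ev_poly (p * q) y = ev_poly p y * ev_poly q y"
  unfolding ev_poly_def
  by (rule poly_map_poly_mult) (simp_all add: ratfun_const_add ratfun_const_mult)

lemma ev_poly_monom: "ev_poly (monom a n) y = ratfun_const a * y ^ n"
  by (simp add: ev_poly_def map_poly_monom poly_monom)

lemma eval2_0 [simp]: "eval2 0 x z = 0"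
  by (simp add: eval2_def)

lemma eval2_pCons: "eval2 (pCons p c) x z = ev_poly p x + z * eval2 c x z"
  by (simp add: eval2_def map_poly_pCons)

lemma eval2_add: "eval2 (c + c') x z = eval2 c x z + eval2 c' x z"
  unfolding eval2_def by (rule poly_map_poly_add) (simp_all add: ev_poly_add)

lemma eval2_mult: "eval2 (c * c') x z = eval2 c x z * eval2 c' x z"
  unfolding eval2_def by (rule poly_map_poly_mult) (simp_all add: ev_poly_add ev_poly_mult)

lemma eval2_sum: "eval2 (\<Sum>i\<in>A. c i) x z = (\<Sum>i\<in>A. eval2 (c i) x z)"
  by (induction A rule: infinite_finite_induct) (simp_all add: eval2_add)

lemma eval2_monom: "eval2 (monom p n) x z = ev_poly p x * z ^ n"
  by (simp add: eval2_def map_poly_monom poly_monom)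

lemma eval2_monom_monom: "eval2 (monom (monom a i) j) x z = ratfun_const a * x ^ i * z ^ j"
  by (simp add: eval2_monom ev_poly_monom)

lemma eval2_pcompose: "eval2 (pcompose c s) x z = eval2 c x (eval2 s x z)"
  by (induction c) (simp_all add: pcompose_pCons eval2_pCons eval2_add eval2_mult)

section \<open>Substituting a power of \<open>q\<close>\<close>

definition transcendental_ratfun :: "'k::field poly fract \<Rightarrow> bool" where
  "transcendental_ratfun y \<longleftrightarrow> (\<forall>r. r \<noteq> 0 \<longrightarrow> ev_poly r y \<noteq> 0)"

context
  fixes y :: "'k::field poly fract"
  assumes y: "transcendental_ratfun y"
begin

lemma ev_poly_transcendental_nonzero: "r \<noteq> 0 \<Longrightarrow> ev_poly r y \<noteq> 0"
  using y by (simp add: transcendental_ratfun_def)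

lemma subst_ratfun_Fract:
  assumes "r \<noteq> 0"
  shows "subst_ratfun (Fract p r) y = ev_poly p y / ev_poly r y"
proof -
  \<comment> \<open>Whichever representative \<open>SOME\<close> picks, cross-multiplying and evaluating gives the same quotient.\<close>
  let ?P = "\<lambda>(p', r'). r' \<noteq> 0 \<and> Fract p r = Fract p' r'"
  obtain p' r' where pr: "(SOME pr. ?P pr) = (p', r')"
    by (cases "SOME pr. ?P pr")
  have "?P (p', r')"
    using someI[of ?P "(p, r)"] assms by (simp add: pr)
  then have "r' \<noteq> 0" and "p * r' = p' * r"
    using assms by (auto simp: eq_fract)
  then have "ev_poly p y * ev_poly r' y = ev_poly p' y * ev_poly r y"
    by (metis ev_poly_mult)
  then show ?thesis
    using \<open>r' \<noteq> 0\<close> assms ev_poly_transcendental_nonzero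
    by (simp add: subst_ratfun_def pr divide_simps)
qed

lemma subst_ratfun_add: "subst_ratfun (u + v) y = subst_ratfun u y + subst_ratfun v y"
proof -
  obtain p r p' r' where "u = Fract p r" "r \<noteq> 0" "v = Fract p' r'" "r' \<noteq> 0"
    by (metis Fract_cases)
  then show ?thesis
    using ev_poly_transcendental_nonzero
    by (simp add: subst_ratfun_Fract ev_poly_add ev_poly_mult divide_simps)
qed

lemma subst_ratfun_mult: "subst_ratfun (u * v) y = subst_ratfun u y * subst_ratfun v y"
proof -
  obtain p r p' r' where "u = Fract p r" "r \<noteq> 0" "v = Fract p' r'" "r' \<noteq> 0"
    by (metis Fract_cases)
  then show ?thesis
    using ev_poly_transcendental_nonzero
    by (simp add: subst_ratfun_Fract ev_poly_mult)
qed

lemma subst_ratfun_polynomial: "subst_ratfun (Fract p 1) y = ev_poly p y"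
  by (simp add: subst_ratfun_Fract)

lemma subst_ratfun_0 [simp]: "subst_ratfun 0 y = 0"
  using subst_ratfun_polynomial[of 0] by (simp add: Zero_fract_def)

lemma subst_ratfun_sum: "subst_ratfun (\<Sum>i\<in>A. u i) y = (\<Sum>i\<in>A. subst_ratfun (u i) y)"
  by (induction A rule: infinite_finite_induct) (simp_all add: subst_ratfun_add)

lemma subst_ratfun_qvar: "subst_ratfun qvar y = y"
  by (simp add: qvar_def subst_ratfun_polynomial ev_poly_pCons)

lemma subst_ratfun_power: "subst_ratfun (u ^ n) y = subst_ratfun u y ^ n"
proof (induction n)
  case 0
  show ?case
    using subst_ratfun_polynomial[of 1] by (simp add: One_fract_def)
qed (simp add: subst_ratfun_mult)

lemma subst_ratfun_ev_poly: "subst_ratfun (ev_poly p x) y = ev_poly p (subst_ratfun x y)"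
proof (induction p)
  case (pCons a p)
  have "subst_ratfun (ratfun_const a) y = ratfun_const a"
    by (simp add: ratfun_const_def subst_ratfun_polynomial)
  with pCons show ?case
    by (simp add: ev_poly_pCons subst_ratfun_add subst_ratfun_mult)
qed simp

lemma subst_ratfun_eval2: "subst_ratfun (eval2 c x z) y = eval2 c (subst_ratfun x y) (subst_ratfun z y)"
  by (induction c) (simp_all add: eval2_pCons subst_ratfun_add subst_ratfun_mult subst_ratfun_ev_poly)

end

lemma qvar_nonzero: "qvar \<noteq> 0"
  by (simp add: qvar_def Zero_fract_def eq_fract)

lemma qvar_power: "qvar ^ k = Fract (monom 1 k) 1"
  by (induction k) (simp_all add: qvar_def One_fract_def monom_Suc flip: one_pCons)

lemma ev_poly_Fract: "ev_poly p (Fract s 1) = Fract (pcompose p s) 1"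
  by (induction p) (simp_all add: ev_poly_pCons pcompose_pCons ratfun_const_def Zero_fract_def)

lemma transcendental_ratfun_Fract:
  assumes "degree s > 0"
  shows "transcendental_ratfun (Fract s 1)"
  using pcompose_eq_0[of _ s] assms
  by (auto simp: transcendental_ratfun_def ev_poly_Fract Zero_fract_def eq_fract)

lemma transcendental_ratfun_inverse:
  assumes y: "transcendental_ratfun y" and "y \<noteq> 0"
  shows "transcendental_ratfun (inverse y)"
  unfolding transcendental_ratfun_def
proof (intro allI impI)
  fix r :: "'a poly"
  assume "r \<noteq> 0"
  have "degree (map_poly ratfun_const r) = degree r"
    by (simp add: degree_map_poly)
  then have "poly (reflect_poly (map_poly ratfun_const r)) y = y ^ degree r * ev_poly r (inverse y)"
    using \<open>y \<noteq> 0\<close> by (simp add: poly_reflect_poly_nz ev_poly_def)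
  moreover have "reflect_poly (map_poly ratfun_const r) = map_poly ratfun_const (reflect_poly r)"
    by (rule poly_eqI) (simp add: coeff_reflect_poly coeff_map_poly degree_map_poly)
  moreover have "ev_poly (reflect_poly r) y \<noteq> 0"
    using y \<open>r \<noteq> 0\<close> by (simp add: transcendental_ratfun_def)
  ultimately show "ev_poly r (inverse y) \<noteq> 0"
    by (simp add: ev_poly_def)
qed

lemma transcendental_ratfun_qvar_power_int:
  assumes "a \<noteq> 0"
  shows "transcendental_ratfun (qvar powi a)"
proof -
  have power: "transcendental_ratfun (qvar ^ k)" if "k > 0" for k
    using that by (simp add: qvar_power transcendental_ratfun_Fract degree_monom_eq)
  show ?thesis
  proof (cases "a > 0")
    case True
    then show ?thesis
      using power[of "nat a"] by (simp add: power_int_def)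
  next
    case False
    then have "transcendental_ratfun (inverse (qvar ^ nat (- a)))"
      using assms by (intro transcendental_ratfun_inverse power) (simp_all add: qvar_nonzero)
    then show ?thesis
      using False assms by (simp add: power_int_def power_inverse)
  qed
qed

section \<open>Bivariate polynomials and clearing denominators\<close>

definition bidegree_le :: "'a::zero poly poly \<Rightarrow> nat \<Rightarrow> nat \<Rightarrow> bool" where
  "bidegree_le c A B \<longleftrightarrow> degree c \<le> B \<and> (\<forall>j. degree (coeff c j) \<le> A)"

lemma bidegree_le_mono: "bidegree_le c A B \<Longrightarrow> A \<le> A' \<Longrightarrow> B \<le> B' \<Longrightarrow> bidegree_le c A' B'"
  by (auto simp: bidegree_le_def intro: order_trans)

lemma bidegree_le_exists: "\<exists>A B. bidegree_le c A B"
proof -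
  have "degree (coeff c j) \<le> Max ((\<lambda>j. degree (coeff c j)) ` {..degree c})" for j
    by (cases "j \<le> degree c") (simp_all add: coeff_eq_0)
  then show ?thesis
    unfolding bidegree_le_def by blast
qed

lemma bidegree_le_exists_family:
  fixes c :: "nat \<Rightarrow> 'a::zero poly poly"
  shows "\<exists>A B. \<forall>j\<le>d. bidegree_le (c j) A B"
proof (induction d)
  case 0
  show ?case
    using bidegree_le_exists[of "c 0"] by simp
next
  case (Suc d)
  obtain A B where "\<forall>j\<le>d. bidegree_le (c j) A B"
    using Suc.IH by blast
  moreover obtain A' B' where "bidegree_le (c (Suc d)) A' B'"
    using bidegree_le_exists by blast
  ultimately have "\<forall>j\<le>Suc d. bidegree_le (c j) (max A A') (max B B')"
    by (auto simp: le_Suc_eq intro: bidegree_le_mono)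
  then show ?case
    by blast
qed

lemma bidegree_le_sum:
  "finite S \<Longrightarrow> (\<And>s. s \<in> S \<Longrightarrow> bidegree_le (c s) A B) \<Longrightarrow> bidegree_le (\<Sum>s\<in>S. c s) A B"
  by (auto simp: bidegree_le_def coeff_sum intro!: degree_sum_le)

lemma bidegree_le_monom_monom: "i \<le> A \<Longrightarrow> j \<le> B \<Longrightarrow> bidegree_le (monom (monom a i) j) A B"
  by (auto simp: bidegree_le_def coeff_monom degree_monom_le intro: order_trans[OF degree_monom_le])

lemma bidegree_le_mult:
  fixes c c' :: "'a::comm_semiring_1 poly poly"
  assumes "bidegree_le c A B" "bidegree_le c' A' B'"
  shows "bidegree_le (c * c') (A + A') (B + B')"
  unfolding bidegree_le_def
proof (intro conjI allI)
  show "degree (c * c') \<le> B + B'"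
    using assms degree_mult_le[of c c'] by (auto simp: bidegree_le_def)
  show "degree (coeff (c * c') j) \<le> A + A'" for j
    unfolding coeff_mult using assms
    by (intro degree_sum_le) (auto simp: bidegree_le_def intro!: order_trans[OF degree_mult_le] add_mono)
qed

lemma coeff_coeff_eq_0_if_bidegree_le:
  assumes "bidegree_le c A B" "A < i \<or> B < j"
  shows "coeff (coeff c j) i = 0"
proof (cases "A < i")
  case True
  then show ?thesis
    using assms(1) by (intro coeff_eq_0) (auto simp: bidegree_le_def intro: le_less_trans)
next
  case False
  then have "coeff c j = 0"
    using assms by (intro coeff_eq_0) (auto simp: bidegree_le_def)
  then show ?thesis
    by simp
qed

lemma poly2_nonzero_coeff:
  assumes "c \<noteq> 0"
  obtains i j where "coeff (coeff c j) i \<noteq> 0"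
  using leading_coeff_neq_0[OF leading_coeff_neq_0[OF assms]] by blast

lemma coeff_coeff_monom_sum:
  assumes "finite I" "finite J" "inj_on \<sigma> I" "inj_on \<tau> J" "i \<in> I" "j \<in> J"
  shows "coeff (coeff (\<Sum>j'\<in>J. \<Sum>i'\<in>I. monom (monom (h i' j') (\<sigma> i')) (\<tau> j')) (\<tau> j)) (\<sigma> i) = h i j"
proof -
  have "coeff (coeff (\<Sum>j'\<in>J. \<Sum>i'\<in>I. monom (monom (h i' j') (\<sigma> i')) (\<tau> j')) (\<tau> j)) (\<sigma> i) =
        (\<Sum>j'\<in>J. \<Sum>i'\<in>I. if j' = j \<and> i' = i then h i' j' else 0)"
    unfolding coeff_sum coeff_monom
    using assms by (intro sum.cong refl) (auto dest: inj_onD)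
  also have "\<dots> = (\<Sum>j'\<in>J. if j' = j then h i j else 0)"
  proof (rule sum.cong)
    show "(\<Sum>i'\<in>I. if j' = j \<and> i' = i then h i' j' else 0) = (if j' = j then h i j else 0)" for j'
      using assms by (cases "j' = j") simp_all
  qed simp
  also have "\<dots> = h i j"
    using assms by simp
  finally show ?thesis .
qed

definition exponent_map2 ::
    "(nat \<Rightarrow> nat) \<Rightarrow> (nat \<Rightarrow> nat) \<Rightarrow> nat \<Rightarrow> nat \<Rightarrow> 'a::comm_monoid_add poly poly \<Rightarrow> 'a poly poly" where
  "exponent_map2 \<sigma> \<tau> A B c = (\<Sum>j\<le>B. \<Sum>i\<le>A. monom (monom (coeff (coeff c j) i) (\<sigma> i)) (\<tau> j))"

lemma exponent_map2_id:
  assumes "bidegree_le c A B"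
  shows "exponent_map2 id id A B c = c"
proof -
  have "monom (\<Sum>i\<le>A. monom (coeff (coeff c j) i) i) j = monom (coeff c j) j" for j
    using assms by (simp add: bidegree_le_def poly_as_sum_of_monoms')
  then show ?thesis
    using assms by (simp add: exponent_map2_def bidegree_le_def poly_as_sum_of_monoms' flip: monom_sum)
qed

lemma eval2_exponent_map2:
  "eval2 (exponent_map2 \<sigma> \<tau> A B c) x z =
     (\<Sum>j\<le>B. \<Sum>i\<le>A. ratfun_const (coeff (coeff c j) i) * x ^ \<sigma> i * z ^ \<tau> j)"
  by (simp add: exponent_map2_def eval2_sum eval2_monom_monom)

lemma exponent_map2_nonzero:
  assumes "bidegree_le c A B" "c \<noteq> 0" "inj_on \<sigma> {..A}" "inj_on \<tau> {..B}"
  shows "exponent_map2 \<sigma> \<tau> A B c \<noteq> 0"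
proof -
  obtain i j where ij: "coeff (coeff c j) i \<noteq> 0"
    using \<open>c \<noteq> 0\<close> by (rule poly2_nonzero_coeff)
  then have "i \<le> A" "j \<le> B"
    using coeff_coeff_eq_0_if_bidegree_le[OF assms(1)] not_less by blast+
  then have "coeff (coeff (exponent_map2 \<sigma> \<tau> A B c) (\<tau> j)) (\<sigma> i) \<noteq> 0"
    using ij assms(3,4) coeff_coeff_monom_sum[of "{..A}" "{..B}" \<sigma> \<tau> i j "\<lambda>i j. coeff (coeff c j) i"]
    by (simp add: exponent_map2_def)
  then show ?thesis
    by auto
qed

lemma bidegree_le_exponent_map2:
  "(\<And>i. i \<le> A \<Longrightarrow> \<sigma> i \<le> A') \<Longrightarrow> (\<And>j. j \<le> B \<Longrightarrow> \<tau> j \<le> B') \<Longrightarrow>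
    bidegree_le (exponent_map2 \<sigma> \<tau> A B c) A' B'"
  unfolding exponent_map2_def by (intro bidegree_le_sum bidegree_le_monom_monom) auto

lemma eval2_exponent_map2_scaled:
  assumes "bidegree_le c A B"
  shows "eval2 (exponent_map2 ((*) k) ((*) k) A B c) x z = eval2 c (x ^ k) (z ^ k)"
proof -
  have "eval2 c (x ^ k) (z ^ k) = eval2 (exponent_map2 id id A B c) (x ^ k) (z ^ k)"
    using assms by (simp add: exponent_map2_id)
  then show ?thesis
    by (simp add: eval2_exponent_map2 power_mult)
qed

lemma eval2_exponent_map2_reflected:
  assumes "bidegree_le c A B" "x \<noteq> 0" "z \<noteq> 0"
  shows "eval2 (exponent_map2 (\<lambda>i. k * (A - i)) (\<lambda>j. k * (B - j)) A B c) x z =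
           (x ^ k) ^ A * (z ^ k) ^ B * eval2 c (inverse (x ^ k)) (inverse (z ^ k))"
proof -
  have "eval2 c (inverse (x ^ k)) (inverse (z ^ k)) =
          eval2 (exponent_map2 id id A B c) (inverse (x ^ k)) (inverse (z ^ k))"
    using assms by (simp add: exponent_map2_id)
  also have "(x ^ k) ^ A * (z ^ k) ^ B * \<dots> =
      (\<Sum>j\<le>B. \<Sum>i\<le>A. ratfun_const (coeff (coeff c j) i) *
         ((x ^ k) ^ A / (x ^ k) ^ i) * ((z ^ k) ^ B / (z ^ k) ^ j))"
    by (simp add: eval2_exponent_map2 sum_distrib_left power_inverse divide_inverse mult_ac)
  also have "\<dots> = (\<Sum>j\<le>B. \<Sum>i\<le>A. ratfun_const (coeff (coeff c j) i) * x ^ (k * (A - i)) * z ^ (k * (B - j)))"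
    using assms by (intro sum.cong refl) (simp add: power_diff power_mult)
  finally show ?thesis
    by (simp add: eval2_exponent_map2)
qed

lemma polynomial_coefficients_after_subst:
  fixes c :: "nat \<Rightarrow> 'k::field poly poly" and x :: "'k poly fract"
  assumes "x \<noteq> 0" "a \<noteq> 0"
  obtains L F A B
  where "\<And>j n. j \<le> d \<Longrightarrow> eval2 (L j) x (x ^ n) = F n * eval2 (c j) (x powi a) ((x powi a) ^ n)"
    and "\<And>n. F n \<noteq> 0"
    and "\<And>j. j \<le> d \<Longrightarrow> bidegree_le (L j) A B"
    and "\<And>j. j \<le> d \<Longrightarrow> c j \<noteq> 0 \<Longrightarrow> L j \<noteq> 0"
proof -
  obtain A B where c: "\<And>j. j \<le> d \<Longrightarrow> bidegree_le (c j) A B"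
    using bidegree_le_exists_family by blast
  define k where "k = nat \<bar>a\<bar>"
  have "k > 0"
    using assms by (simp add: k_def)
  then have inj: "inj_on ((*) k) S" "inj_on (\<lambda>i. k * (N - i)) {..N}" for S N
    by (auto simp: inj_on_def)
  show thesis
  proof (cases "a > 0")
    case True
    then have "x powi a = x ^ k"
      by (simp add: k_def power_int_def)
    then show thesis
      using c inj
      by (intro that[where L = "\<lambda>j. exponent_map2 ((*) k) ((*) k) A B (c j)" and F = "\<lambda>_. 1" and A = "k * A" and B = "k * B"])
        (simp_all add: eval2_exponent_map2_scaled exponent_map2_nonzero bidegree_le_exponent_map2
           flip: power_mult add: mult.commute)
  next
    case False
    then have "x powi a = inverse (x ^ k)"
      by (simp add: k_def power_int_def power_inverse)
    then show thesis
      using c inj \<open>x \<noteq> 0\<close>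
      by (intro that[where L = "\<lambda>j. exponent_map2 (\<lambda>i. k * (A - i)) (\<lambda>j. k * (B - j)) A B (c j)"
            and F = "\<lambda>n. (x ^ k) ^ A * ((x ^ n) ^ k) ^ B" and A = "k * A" and B = "k * B"])
        (simp_all add: eval2_exponent_map2_reflected exponent_map2_nonzero bidegree_le_exponent_map2
           power_inverse mult.commute flip: power_mult)
  qed
qed

lemma recurrence_after_subst_qvar_power_int:
  fixes f :: "nat \<Rightarrow> 'k::field poly fract" and c :: "nat \<Rightarrow> 'k poly poly"
  assumes "a \<noteq> 0" "c d \<noteq> 0"
    and rec: "\<And>n. (\<Sum>j\<le>d. eval2 (c j) qvar (qvar ^ n) * f (n + j)) = 0"
  obtains L A B where "\<And>j. j \<le> d \<Longrightarrow> bidegree_le (L j) A B" "L d \<noteq> 0"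
    and "\<And>n. (\<Sum>j\<le>d. eval2 (L j) qvar (qvar ^ n) * subst_ratfun (f (n + j)) (qvar powi a)) = 0"
proof -
  let ?y = "(qvar :: 'k poly fract) powi a"
  have y: "transcendental_ratfun ?y"
    using \<open>a \<noteq> 0\<close> by (rule transcendental_ratfun_qvar_power_int)
  obtain L F A B
    where L: "\<And>j n. j \<le> d \<Longrightarrow> eval2 (L j) qvar (qvar ^ n) = F n * eval2 (c j) ?y (?y ^ n)"
    and "\<And>n. F n \<noteq> 0"
    and bound: "\<And>j. j \<le> d \<Longrightarrow> bidegree_le (L j) A B"
    and nonzero: "\<And>j. j \<le> d \<Longrightarrow> c j \<noteq> 0 \<Longrightarrow> L j \<noteq> 0"
    using polynomial_coefficients_after_subst[OF qvar_nonzero \<open>a \<noteq> 0\<close>, where c = c and d = d] by metis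
  show thesis
  proof (rule that[OF bound])
    show "L d \<noteq> 0"
      using nonzero \<open>c d \<noteq> 0\<close> by simp
    show "(\<Sum>j\<le>d. eval2 (L j) qvar (qvar ^ n) * subst_ratfun (f (n + j)) ?y) = 0" for n
    proof -
      have "(\<Sum>j\<le>d. eval2 (L j) qvar (qvar ^ n) * subst_ratfun (f (n + j)) ?y) =
            F n * subst_ratfun (\<Sum>j\<le>d. eval2 (c j) qvar (qvar ^ n) * f (n + j)) ?y"
        using y by (simp add: L subst_ratfun_sum subst_ratfun_mult subst_ratfun_eval2
            subst_ratfun_qvar subst_ratfun_power sum_distrib_left mult.assoc)
      then show ?thesis
        using y by (simp add: rec)
    qed
  qed
qed

section \<open>Combining shifted recurrences\<close>

definition poly2_shift :: "nat \<Rightarrow> 'a::comm_ring_1 poly poly \<Rightarrow> 'a poly poly" where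
  "poly2_shift i c = pcompose c (monom (monom 1 i) 1)"

lemma eval2_poly2_shift: "eval2 (poly2_shift i c) x z = eval2 c x (x ^ i * z)"
  by (simp add: poly2_shift_def eval2_pcompose eval2_monom_monom)

lemma coeff_poly2_shift: "coeff (poly2_shift i c) j = monom 1 (i * j) * coeff c j"
  by (simp add: poly2_shift_def monom_power mult.commute One_nat_def)

lemma poly2_shift_eq_0_iff [simp]:
  fixes c :: "'a::idom poly poly"
  shows "poly2_shift i c = 0 \<longleftrightarrow> c = 0"
proof -
  have "coeff (poly2_shift i c) j = 0 \<longleftrightarrow> coeff c j = 0" for j
    by (simp add: coeff_poly2_shift)
  then show ?thesis
    by (auto intro: poly_eqI)
qed

lemma bidegree_le_poly2_shift:
  assumes "bidegree_le c A B"
  shows "bidegree_le (poly2_shift i c) (A + i * B) B"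
  unfolding bidegree_le_def
proof (intro conjI allI)
  show "degree (poly2_shift i c) \<le> B"
    using assms by (intro degree_le) (auto simp: coeff_poly2_shift bidegree_le_def coeff_eq_0)
  show "degree (coeff (poly2_shift i c) j) \<le> A + i * B" for j
  proof (cases "j \<le> B")
    case True
    then have "degree (monom (1 :: 'a) (i * j) * coeff c j) \<le> i * B + A"
      using assms by (intro order_trans[OF degree_mult_le] add_mono)
        (auto simp: bidegree_le_def degree_monom_le intro: order_trans[OF degree_monom_le])
    then show ?thesis
      by (simp add: coeff_poly2_shift add.commute)
  next
    case False
    then show ?thesis
      using assms by (simp add: coeff_poly2_shift bidegree_le_def coeff_eq_0)
  qed
qed

text \<open>The \<open>k\<close>-th coefficient of \<open>\<Sum>\<^sub>i P\<^sub>i \<cdot> (recurrence shifted by i)\<close>; the shift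
  \<open>n \<mapsto> n + i\<close> is the substitution \<open>v \<mapsto> u\<^sup>i v\<close> of \<open>poly2_shift\<close>.\<close>

definition shifted_combination ::
    "nat \<Rightarrow> nat \<Rightarrow> (nat \<Rightarrow> 'a::comm_ring_1 poly poly) \<Rightarrow> (nat \<Rightarrow> 'a poly poly) \<Rightarrow> nat \<Rightarrow> 'a poly poly" where
  "shifted_combination e d P L k = (\<Sum>i\<le>e. \<Sum>j\<le>d. if i + j = k then P i * poly2_shift i (L j) else 0)"

lemma eval2_shifted_combination:
  "eval2 (shifted_combination e d P L k) x (x ^ n) =
     (\<Sum>i\<le>e. \<Sum>j\<le>d. if i + j = k then eval2 (P i) x (x ^ n) * eval2 (L j) x (x ^ (n + i)) else 0)"
  unfolding shifted_combination_def eval2_sum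
  by (intro sum.cong refl) (simp add: eval2_mult eval2_poly2_shift power_add mult.commute)

lemma shifted_combination_recurrence:
  fixes x :: "'k::field poly fract"
  assumes rec: "\<And>n. (\<Sum>j\<le>d. eval2 (L j) x (x ^ n) * g (n + j)) = 0"
  shows "(\<Sum>k\<le>e + d. eval2 (shifted_combination e d P L k) x (x ^ n) * g (n + k)) = 0"
proof -
  define T where "T i j k = (if i + j = k then eval2 (P i) x (x ^ n) * eval2 (L j) x (x ^ (n + i)) * g (n + k) else 0)"
    for i j k
  have "(\<Sum>k\<le>e + d. eval2 (shifted_combination e d P L k) x (x ^ n) * g (n + k)) =
        (\<Sum>k\<le>e + d. \<Sum>i\<le>e. \<Sum>j\<le>d. T i j k)"
    unfolding eval2_shifted_combination sum_distrib_right T_def by (intro sum.cong refl) simp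
  also have "\<dots> = (\<Sum>i\<le>e. \<Sum>k\<le>e + d. \<Sum>j\<le>d. T i j k)"
    by (rule sum.swap)
  also have "\<dots> = (\<Sum>i\<le>e. \<Sum>j\<le>d. \<Sum>k\<le>e + d. T i j k)"
    by (intro sum.cong refl sum.swap)
  also have "\<dots> = (\<Sum>i\<le>e. eval2 (P i) x (x ^ n) * (\<Sum>j\<le>d. eval2 (L j) x (x ^ (n + i)) * g (n + i + j)))"
    by (intro sum.cong refl) (auto simp: T_def sum_distrib_left mult.assoc add.assoc)
  also have "\<dots> = 0"
    by (simp add: rec)
  finally show ?thesis .
qed

lemma shifted_combination_top_nonzero:
  fixes P L :: "nat \<Rightarrow> 'a::idom poly poly"
  assumes "i \<le> e" "P i \<noteq> 0" "L d \<noteq> 0"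
  shows "\<exists>k\<le>e + d. shifted_combination e d P L k \<noteq> 0"
proof -
  define i0 where "i0 = (GREATEST i. i \<le> e \<and> P i \<noteq> 0)"
  have i0: "i0 \<le> e \<and> P i0 \<noteq> 0"
    unfolding i0_def by (rule GreatestI_nat[where b = e]) (use assms in auto)
  have above: "P i = 0" if "i0 < i" "i \<le> e" for i
  proof (rule ccontr)
    assume "P i \<noteq> 0"
    then have "i \<le> i0"
      unfolding i0_def using that(2) by (intro Greatest_le_nat[where b = e]) auto
    with that(1) show False
      by simp
  qed
  have "(\<Sum>j\<le>d. if i + j = i0 + d then P i * poly2_shift i (L j) else 0) =
          (if i = i0 then P i0 * poly2_shift i0 (L d) else 0)" if "i \<le> e" for i
  proof (cases i0 i rule: linorder_cases)
    case less
    then show ?thesis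
      using above[OF less that] by (simp add: sum.neutral)
  next
    case greater
    then have "i + j \<noteq> i0 + d" if "j \<le> d" for j
      using that by linarith
    then show ?thesis
      using greater by (simp add: sum.neutral)
  qed simp
  then have "shifted_combination e d P L (i0 + d) = P i0 * poly2_shift i0 (L d)"
    using i0 by (simp add: shifted_combination_def)
  then show ?thesis
    using i0 assms(3) by (intro exI[of _ "i0 + d"]) simp
qed

lemma shifted_combination_eq_0_above: "e + d < k \<Longrightarrow> shifted_combination e d P L k = 0"
  by (auto simp: shifted_combination_def intro!: sum.neutral)

lemma shifted_combination_linear:
  "shifted_combination e d (\<lambda>i. C * P i + D * Q i) L k =
     C * shifted_combination e d P L k + D * shifted_combination e d Q L k"
  by (simp add: shifted_combination_def sum_distrib_left flip: sum.distrib)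
    (intro sum.cong refl, simp add: algebra_simps)

lemma bidegree_le_shifted_combination:
  assumes "\<And>i. i \<le> e \<Longrightarrow> bidegree_le (P i) A' B'" "\<And>j. j \<le> d \<Longrightarrow> bidegree_le (L j) A B"
  shows "bidegree_le (shifted_combination e d P L k) (A' + (A + e * B)) (B' + B)"
  unfolding shifted_combination_def
proof (intro bidegree_le_sum)
  fix i j assume "i \<in> {..e}" "j \<in> {..d}"
  then have "bidegree_le (poly2_shift i (L j)) (A + e * B) B"
    using assms(2) bidegree_le_poly2_shift by (fastforce intro: bidegree_le_mono)
  then show "bidegree_le (if i + j = k then P i * poly2_shift i (L j) else 0) (A' + (A + e * B)) (B' + B)"
    using assms(1) \<open>i \<in> {..e}\<close> by (simp add: bidegree_le_mult) (simp add: bidegree_le_def)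
qed simp_all

section \<open>Polynomials in \<open>u\<^sup>m\<close> and \<open>v\<^sup>m\<close>\<close>

definition poly_compress :: "nat \<Rightarrow> 'a::zero poly \<Rightarrow> 'a poly" where
  "poly_compress m p = Poly (map (\<lambda>i. coeff p (m * i)) [0..<Suc (degree p)])"

lemma poly_compress_0 [simp]: "poly_compress m 0 = 0"
  by (simp add: poly_compress_def)

lemma coeff_poly_compress:
  assumes "m > 0"
  shows "coeff (poly_compress m p) i = coeff p (m * i)"
proof (cases "i \<le> degree p")
  case False
  moreover have "i \<le> m * i"
    using assms by simp
  ultimately have "degree p < m * i"
    by linarith
  then show ?thesis
    using False by (simp add: poly_compress_def nth_default_def coeff_eq_0)
qed (simp add: poly_compress_def nth_default_def del: upt_Suc)

lemma poly_bounded_sum: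
  fixes p :: "'a::comm_semiring_1 poly"
  assumes "degree p \<le> N"
  shows "poly p x = (\<Sum>i\<le>N. coeff p i * x ^ i)"
  by (subst poly_as_sum_of_monoms'[OF assms, symmetric]) (simp add: poly_sum poly_monom)

lemma poly_poly_compress:
  fixes p :: "'a::comm_semiring_1 poly"
  assumes "m > 0" and dvd: "\<And>i. \<not> m dvd i \<Longrightarrow> coeff p i = 0"
  shows "poly (poly_compress m p) (x ^ m) = poly p x"
proof -
  let ?D = "degree p"
  have "degree (poly_compress m p) \<le> ?D"
  proof (intro degree_le allI impI)
    fix i assume "?D < i"
    moreover have "i \<le> m * i"
      using assms by simp
    ultimately have "?D < m * i"
      by linarith
    then show "coeff (poly_compress m p) i = 0"
      using assms by (simp add: coeff_poly_compress coeff_eq_0)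
  qed
  then have "poly (poly_compress m p) (x ^ m) = (\<Sum>i\<le>?D. coeff p (m * i) * x ^ (m * i))"
    using assms by (simp add: poly_bounded_sum coeff_poly_compress power_mult)
  also have "\<dots> = (\<Sum>k\<in>(*) m ` {..?D}. coeff p k * x ^ k)"
    using assms by (simp add: sum.reindex inj_on_def)
  also have "\<dots> = (\<Sum>k\<le>m * ?D. coeff p k * x ^ k)"
  proof (intro sum.mono_neutral_left ballI)
    show "coeff p k * x ^ k = 0" if "k \<in> {..m * ?D} - (*) m ` {..?D}" for k
    proof -
      have "\<not> m dvd k"
      proof
        assume "m dvd k"
        then obtain t where "k = m * t"
          by blast
        with that \<open>m > 0\<close> show False
          by auto
      qed
      then show ?thesis
        by (simp add: dvd)
    qed
  qed auto
  also have "\<dots> = poly p x"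
    using assms by (intro poly_bounded_sum[symmetric]) simp
  finally show ?thesis .
qed

lemma poly_compress_map_poly:
  assumes "m > 0" "h 0 = 0"
  shows "poly_compress m (map_poly h p) = map_poly h (poly_compress m p)"
  using assms by (intro poly_eqI) (simp add: coeff_poly_compress coeff_map_poly)

definition exponents_dvd :: "nat \<Rightarrow> 'a::zero poly poly \<Rightarrow> bool" where
  "exponents_dvd m c \<longleftrightarrow> (\<forall>i j. coeff (coeff c j) i \<noteq> 0 \<longrightarrow> m dvd i \<and> m dvd j)"

definition poly2_compress :: "nat \<Rightarrow> 'a::zero poly poly \<Rightarrow> 'a poly poly" where
  "poly2_compress m c = map_poly (poly_compress m) (poly_compress m c)"

lemma exponents_dvdD:
  assumes "exponents_dvd m c" "coeff (coeff c j) i \<noteq> 0"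
  shows "m dvd i" "m dvd j"
  using assms by (simp_all add: exponents_dvd_def)

lemma exponents_dvd_coeff_eq_0:
  assumes "exponents_dvd m c" "\<not> m dvd j"
  shows "coeff c j = 0"
proof (rule ccontr)
  assume "coeff c j \<noteq> 0"
  then have "coeff (coeff c j) (degree (coeff c j)) \<noteq> 0"
    by (rule leading_coeff_neq_0)
  then show False
    using exponents_dvdD(2)[OF assms(1)] assms(2) by blast
qed

lemma exponents_dvdI:
  assumes "bidegree_le c A B"
    and "\<And>i j. i \<le> A \<Longrightarrow> j \<le> B \<Longrightarrow> \<not> (m dvd i \<and> m dvd j) \<Longrightarrow> coeff (coeff c j) i = 0"
  shows "exponents_dvd m c"
  unfolding exponents_dvd_def
proof (intro allI impI)
  fix i j
  assume "coeff (coeff c j) i \<noteq> 0"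
  moreover have "i \<le> A" "j \<le> B"
    using coeff_coeff_eq_0_if_bidegree_le[OF assms(1)] calculation not_less by blast+
  ultimately show "m dvd i \<and> m dvd j"
    using assms(2) by blast
qed

lemma eval2_poly2_compress:
  assumes "m > 0" "exponents_dvd m c"
  shows "eval2 (poly2_compress m c) (x ^ m) (z ^ m) = eval2 c x z"
proof -
  have ev_compress: "ev_poly (poly_compress m (coeff c (m * j))) (x ^ m) = ev_poly (coeff c (m * j)) x" for j
  proof -
    have "ev_poly (poly_compress m (coeff c (m * j))) (x ^ m) =
            poly (poly_compress m (map_poly ratfun_const (coeff c (m * j)))) (x ^ m)"
      using \<open>m > 0\<close> by (simp add: ev_poly_def poly_compress_map_poly)
    also have "\<dots> = ev_poly (coeff c (m * j)) x"
      unfolding ev_poly_def using exponents_dvdD(1)[OF assms(2)] \<open>m > 0\<close>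
      by (intro poly_poly_compress) (auto simp: coeff_map_poly)
    finally show ?thesis .
  qed
  have "map_poly (\<lambda>p. ev_poly p (x ^ m)) (poly2_compress m c) =
          map_poly (\<lambda>p. ev_poly p x) (poly_compress m c)"
    using \<open>m > 0\<close> by (intro poly_eqI) (simp add: poly2_compress_def coeff_map_poly coeff_poly_compress ev_compress)
  then have "eval2 (poly2_compress m c) (x ^ m) (z ^ m) =
               poly (poly_compress m (map_poly (\<lambda>p. ev_poly p x) c)) (z ^ m)"
    using \<open>m > 0\<close> by (simp add: eval2_def poly_compress_map_poly)
  also have "\<dots> = eval2 c x z"
    unfolding eval2_def using \<open>m > 0\<close> exponents_dvd_coeff_eq_0[OF assms(2)]
    by (intro poly_poly_compress) (simp_all add: coeff_map_poly)
  finally show ?thesis .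
qed

lemma poly2_compress_nonzero:
  assumes "m > 0" "exponents_dvd m c" "c \<noteq> 0"
  shows "poly2_compress m c \<noteq> 0"
proof -
  obtain i j where ij: "coeff (coeff c j) i \<noteq> 0"
    using \<open>c \<noteq> 0\<close> by (rule poly2_nonzero_coeff)
  obtain i' where "i = m * i'"
    using exponents_dvdD(1)[OF assms(2) ij] by blast
  moreover obtain j' where "j = m * j'"
    using exponents_dvdD(2)[OF assms(2) ij] by blast
  ultimately have "coeff (coeff (poly2_compress m c) j') i' \<noteq> 0"
    using ij \<open>m > 0\<close> by (simp add: poly2_compress_def coeff_map_poly coeff_poly_compress)
  then show ?thesis
    by auto
qed

section \<open>Choosing the multipliers\<close>

lemma homogeneous_system_nontrivial_solution:
  fixes \<Phi> :: "'e \<Rightarrow> ('u \<Rightarrow> 'k::field) \<Rightarrow> 'k"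
  assumes "finite E" "finite U" "card E < card U"
    and linear: "\<And>e a b x y. \<Phi> e (\<lambda>u. a * x u + b * y u) = a * \<Phi> e x + b * \<Phi> e y"
  shows "\<exists>x. (\<exists>u\<in>U. x u \<noteq> 0) \<and> (\<forall>u. u \<notin> U \<longrightarrow> x u = 0) \<and> (\<forall>e\<in>E. \<Phi> e x = 0)"
  using assms(1-3)
proof (induction E arbitrary: U rule: finite_induct)
  case empty
  then obtain u where "u \<in> U"
    by fastforce
  then show ?case
    by (intro exI[of _ "\<lambda>v. if v = u then 1 else 0"]) auto
next
  case (insert e E)
  obtain u1 where "u1 \<in> U"
    using insert.prems by fastforce
  then have "card E < card (U - {u1})"
    using insert by simp
  then obtain x where x: "\<exists>u\<in>U - {u1}. x u \<noteq> 0" "\<forall>u. u \<notin> U - {u1} \<longrightarrow> x u = 0"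
    "\<forall>e\<in>E. \<Phi> e x = 0"
    using insert.IH[of "U - {u1}"] insert.prems by blast
  then obtain u2 where u2: "u2 \<in> U - {u1}" "x u2 \<noteq> 0"
    by blast
  then have "card E < card (U - {u2})"
    using insert by simp
  then obtain y where y: "\<exists>u\<in>U - {u2}. y u \<noteq> 0" "\<forall>u. u \<notin> U - {u2} \<longrightarrow> y u = 0"
    "\<forall>e\<in>E. \<Phi> e y = 0"
    using insert.IH[of "U - {u2}"] insert.prems by blast
  show ?case
  proof (cases "\<Phi> e y = 0")
    case True
    then show ?thesis
      using y by (intro exI[of _ y]) auto
  next
    case False
    \<comment> \<open>This combination kills the new equation and, since \<open>y u2 = 0 \<noteq> x u2\<close>, is nonzero at \<open>u2\<close>.\<close>
    define z where "z = (\<lambda>u. \<Phi> e y * x u + (- \<Phi> e x) * y u)"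
    have "\<Phi> e' z = \<Phi> e y * \<Phi> e' x - \<Phi> e x * \<Phi> e' y" for e'
      unfolding z_def linear by simp
    then have "\<forall>e'\<in>insert e E. \<Phi> e' z = 0"
      using x(3) y(3) by simp
    moreover have "z u2 \<noteq> 0"
      using False u2 y(2) by (simp add: z_def)
    moreover have "\<forall>u. u \<notin> U \<longrightarrow> z u = 0"
      using x(2) y(2) by (simp add: z_def)
    ultimately show ?thesis
      using u2 by blast
  qed
qed

definition poly2_of_coeffs :: "nat \<Rightarrow> (nat \<times> nat \<Rightarrow> 'a::comm_monoid_add) \<Rightarrow> 'a poly poly" where
  "poly2_of_coeffs N x = (\<Sum>j<N. \<Sum>i<N. monom (monom (x (i, j)) i) j)"

lemma coeff_coeff_poly2_of_coeffs: "i < N \<Longrightarrow> j < N \<Longrightarrow> coeff (coeff (poly2_of_coeffs N x) j) i = x (i, j)"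
  using coeff_coeff_monom_sum[of "{..<N}" "{..<N}" id id i j "\<lambda>i j. x (i, j)"]
  by (simp add: poly2_of_coeffs_def)

lemma bidegree_le_poly2_of_coeffs: "bidegree_le (poly2_of_coeffs N x) (N - 1) (N - 1)"
  unfolding poly2_of_coeffs_def by (intro bidegree_le_sum bidegree_le_monom_monom) auto

lemma poly2_of_coeffs_linear:
  "poly2_of_coeffs N (\<lambda>u. s * x u + t * y u) = [:[:s:]:] * poly2_of_coeffs N x + [:[:t:]:] * poly2_of_coeffs N y"
  by (simp add: poly2_of_coeffs_def sum_distrib_left sum.distrib smult_monom flip: add_monom)

lemma multiplier_count:
  fixes m d e C K :: nat
  assumes "m > 0" "e + d = m ^ 2 * d" "K = 2 * (e + 1) * m * C + 1"
  shows "C < m * K" "(e + d + 1) * (m * K * (m * K) - K * K) < (e + 1) * ((m * K - C) * (m * K - C))"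
proof -
  have "C \<le> (e + 1) * m * C"
    using \<open>m > 0\<close> by simp
  then have "C < K"
    using assms(3) by (simp add: algebra_simps)
  moreover have "K \<le> m * K"
    using \<open>m > 0\<close> by simp
  ultimately show "C < m * K"
    by (rule less_le_trans)
  define E where "E = int e + 1"
  \<comment> \<open>Since \<open>e + d = m\<^sup>2 d\<close>, the two leading coefficients differ by exactly one.\<close>
  have key: "E * int m ^ 2 = (int e + int d + 1) * (int m ^ 2 - 1) + 1"
  proof -
    have "int e + int d = int d * int m ^ 2"
      using arg_cong[OF assms(2), of int] by simp
    then show ?thesis
      unfolding E_def by algebra
  qed
  have K: "2 * E * int m * int C = int K - 1"
    using assms(3) by (simp add: E_def algebra_simps)
  have "K * K \<le> m * K * (m * K)"
    using \<open>K \<le> m * K\<close> by (intro mult_le_mono)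
  then have "int ((e + d + 1) * (m * K * (m * K) - K * K)) =
               (int e + int d + 1) * (int m * int K * (int m * int K) - int K * int K)"
    by (simp only: of_nat_mult of_nat_diff of_nat_add of_nat_1)
  also have "\<dots> = (int e + int d + 1) * (int m ^ 2 - 1) * int K ^ 2"
    by (simp add: algebra_simps power2_eq_square)
  also have "\<dots> < (int e + int d + 1) * (int m ^ 2 - 1) * int K ^ 2 + int K + E * int C ^ 2"
    using \<open>C < K\<close> by (simp add: E_def add_pos_nonneg)
  also have "\<dots> = (E * int m ^ 2) * int K ^ 2 - (2 * E * int m * int C) * int K + E * int C ^ 2"
    unfolding key K by (simp add: algebra_simps power2_eq_square)
  also have "\<dots> = E * (int m * int K - int C) ^ 2"
    by (simp add: algebra_simps power2_eq_square)
  also have "\<dots> = int ((e + 1) * ((m * K - C) * (m * K - C)))"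
    using \<open>C < m * K\<close> by (simp add: E_def of_nat_diff power2_eq_square distrib_right)
  finally show "(e + d + 1) * (m * K * (m * K) - K * K) < (e + 1) * ((m * K - C) * (m * K - C))"
    by linarith
qed

lemma card_pairs_not_both_dvd:
  assumes "m > 0"
  shows "card {(i, j). i < m * K \<and> j < m * K \<and> \<not> (m dvd i \<and> m dvd j)} = m * K * (m * K) - K * K"
proof -
  define Good where "Good = (\<lambda>(i, j). (m * i, m * j)) ` ({..<K} \<times> {..<K})"
  have "{(i, j). i < m * K \<and> j < m * K \<and> \<not> (m dvd i \<and> m dvd j)} = {..<m * K} \<times> {..<m * K} - Good"
    using assms by (auto simp: Good_def elim!: dvdE)
  moreover have "Good \<subseteq> {..<m * K} \<times> {..<m * K}"
    using assms by (auto simp: Good_def)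
  moreover have "card Good = K * K"
    unfolding Good_def using assms
    by (subst card_image) (auto simp: inj_on_def card_cartesian_product)
  ultimately show ?thesis
    by (simp add: card_Diff_subset card_cartesian_product finite_subset)
qed

lemma exists_multipliers_exponents_dvd:
  fixes L :: "nat \<Rightarrow> 'k::field poly poly"
  assumes "m > 0" "e + d = m ^ 2 * d" and L: "\<And>j. j \<le> d \<Longrightarrow> bidegree_le (L j) A B"
  shows "\<exists>P. (\<exists>i\<le>e. P i \<noteq> 0) \<and> (\<forall>k. exponents_dvd m (shifted_combination e d P L k))"
proof -
  define C where "C = A + e * B + B"
  define K where "K = 2 * (e + 1) * m * C + 1"
  define N where "N = m * K - C"
  have "C < m * K" and count: "(e + d + 1) * (m * K * (m * K) - K * K) < (e + 1) * (N * N)"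
    using multiplier_count[OF assms(1,2) K_def] by (simp_all add: N_def)
  define P where "P x i = poly2_of_coeffs N (\<lambda>ab. x (i, ab))" for x :: "nat \<times> nat \<times> nat \<Rightarrow> 'k" and i
  define U where "U = {..e} \<times> {..<N} \<times> {..<N}"
  define Bad where "Bad = {(a, b). a < m * K \<and> b < m * K \<and> \<not> (m dvd a \<and> m dvd b)}"
  define \<Phi> where "\<Phi> = (\<lambda>(k, a, b) x. coeff (coeff (shifted_combination e d (P x) L k) b) a)"
  have "P (\<lambda>u. s * x u + t * y u) = (\<lambda>i. [:[:s:]:] * P x i + [:[:t:]:] * P y i)" for s t x y
    by (simp add: P_def fun_eq_iff poly2_of_coeffs_linear)
  then have "\<Phi> u (\<lambda>v. s * x v + t * y v) = s * \<Phi> u x + t * \<Phi> u y" for u s t x y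
    by (cases u) (simp only: \<Phi>_def prod.case shifted_combination_linear, simp)
  moreover have "card ({..e + d} \<times> Bad) < card U"
    using count card_pairs_not_both_dvd[OF assms(1), of K]
    by (simp add: U_def Bad_def card_cartesian_product)
  moreover have "Bad \<subseteq> {..<m * K} \<times> {..<m * K}"
    by (auto simp: Bad_def)
  then have "finite ({..e + d} \<times> Bad)"
    by (auto intro: finite_subset)
  ultimately obtain x where x: "\<exists>u\<in>U. x u \<noteq> 0" "\<forall>u\<in>{..e + d} \<times> Bad. \<Phi> u x = 0"
    using homogeneous_system_nontrivial_solution[of "{..e + d} \<times> Bad" U \<Phi>] by (auto simp: U_def)
  show ?thesis
  proof (rule exI[of _ "P x"], intro conjI allI)
    obtain i a b where u: "(i, a, b) \<in> U" "x (i, a, b) \<noteq> 0"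
      using x(1) by auto
    then have "coeff (coeff (P x i) b) a \<noteq> 0"
      by (simp add: P_def U_def coeff_coeff_poly2_of_coeffs)
    then show "\<exists>i\<le>e. P x i \<noteq> 0"
      using u by (auto simp: U_def)
  next
    fix k
    have "bidegree_le (shifted_combination e d (P x) L k) (N - 1 + (A + e * B)) (N - 1 + B)"
      using bidegree_le_poly2_of_coeffs L unfolding P_def by (rule bidegree_le_shifted_combination)
    then have bound: "bidegree_le (shifted_combination e d (P x) L k) (m * K - 1) (m * K - 1)"
      by (rule bidegree_le_mono) (use \<open>C < m * K\<close> in \<open>simp_all add: N_def C_def\<close>)
    show "exponents_dvd m (shifted_combination e d (P x) L k)"
    proof (cases "k \<le> e + d")
      case True
      show ?thesis
        using bound
      proof (rule exponents_dvdI)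
        fix a b
        assume "a \<le> m * K - 1" "b \<le> m * K - 1" "\<not> (m dvd a \<and> m dvd b)"
        then have "(k, a, b) \<in> {..e + d} \<times> Bad"
          using True \<open>C < m * K\<close> by (auto simp: Bad_def)
        then have "\<Phi> (k, a, b) x = 0"
          using x(2) by blast
        then show "coeff (coeff (shifted_combination e d (P x) L k) b) a = 0"
          by (simp add: \<Phi>_def)
      qed
    qed (simp add: shifted_combination_eq_0_above exponents_dvd_def)
  qed
qed

lemma recurrence_in_powers:
  fixes g :: "nat \<Rightarrow> 'k::field poly fract" and L :: "nat \<Rightarrow> 'k poly poly"
  assumes "m > 0" "\<And>j. j \<le> d \<Longrightarrow> bidegree_le (L j) A B" "L d \<noteq> 0"
    and rec: "\<And>n. (\<Sum>j\<le>d. eval2 (L j) x (x ^ n) * g (n + j)) = 0"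
  shows "\<exists>d' c'. d' \<le> m ^ 2 * d \<and> c' d' \<noteq> 0 \<and>
           (\<forall>n. (\<Sum>j\<le>d'. eval2 (c' j) (x ^ m) ((x ^ m) ^ n) * g (n + j)) = 0)"
proof -
  define e where "e = m ^ 2 * d - d"
  have e: "e + d = m ^ 2 * d"
    using \<open>m > 0\<close> by (simp add: e_def)
  obtain P where P: "\<exists>i\<le>e. P i \<noteq> 0" and dvd: "\<And>k. exponents_dvd m (shifted_combination e d P L k)"
    using exists_multipliers_exponents_dvd[where L = L, OF \<open>m > 0\<close> e assms(2)] by blast
  define M where "M = shifted_combination e d P L"
  define d' where "d' = (GREATEST k. k \<le> m ^ 2 * d \<and> M k \<noteq> 0)"
  have "\<exists>k\<le>m ^ 2 * d. M k \<noteq> 0"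
  proof -
    obtain i where "i \<le> e" "P i \<noteq> 0"
      using P by blast
    then show ?thesis
      unfolding M_def e[symmetric] using \<open>L d \<noteq> 0\<close> by (rule shifted_combination_top_nonzero)
  qed
  then have d': "d' \<le> m ^ 2 * d \<and> M d' \<noteq> 0"
    unfolding d'_def by (elim exE) (rule GreatestI_nat[where b = "m ^ 2 * d"], auto)
  have above: "M k = 0" if "d' < k" "k \<le> m ^ 2 * d" for k
    using that Greatest_le_nat[of "\<lambda>k. k \<le> m ^ 2 * d \<and> M k \<noteq> 0" k "m ^ 2 * d"]
    unfolding d'_def by fastforce
  have "(\<Sum>j\<le>d'. eval2 (poly2_compress m (M j)) (x ^ m) ((x ^ m) ^ n) * g (n + j)) = 0" for n
  proof -
    have "(\<Sum>j\<le>d'. eval2 (poly2_compress m (M j)) (x ^ m) ((x ^ m) ^ n) * g (n + j)) =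
            (\<Sum>j\<le>d'. eval2 (M j) x (x ^ n) * g (n + j))"
    proof -
      have "(x ^ m) ^ n = (x ^ n) ^ m"
        by (simp add: mult.commute flip: power_mult)
      moreover have "exponents_dvd m (M j)" for j
        using dvd by (simp add: M_def)
      ultimately show ?thesis
        using \<open>m > 0\<close> by (simp add: eval2_poly2_compress)
    qed
    also have "\<dots> = (\<Sum>j\<le>m ^ 2 * d. eval2 (M j) x (x ^ n) * g (n + j))"
      using d' above by (intro sum.mono_neutral_left) auto
    also have "\<dots> = 0"
      unfolding M_def e[symmetric] using rec by (rule shifted_combination_recurrence)
    finally show ?thesis .
  qed
  moreover have "poly2_compress m (M d') \<noteq> 0"
    using d' dvd \<open>m > 0\<close> by (simp add: M_def poly2_compress_nonzero)
  ultimately show ?thesis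
    using d' by (intro exI[of _ d'] exI[of _ "\<lambda>j. poly2_compress m (M j)"]) simp
qed

theorem corollary2:
  fixes f :: "nat \<Rightarrow> 'k::field_char_0 poly fract"
    and c :: "nat \<Rightarrow> 'k poly poly"
    and d :: nat
    and \<alpha> :: rat
    and a :: int
    and m :: nat
  assumes roots_of_unity: "\<forall>n>0. \<exists>\<zeta>::'k. \<zeta> ^ n = 1 \<and> (\<forall>k. 0 < k \<and> k < n \<longrightarrow> \<zeta> ^ k \<noteq> 1)"
    and lead: "c d \<noteq> 0"
    and rec: "\<forall>n. (\<Sum>j\<le>d. eval2 (c j) qvar (qvar ^ n) * f (n + j)) = 0"
    and alpha_nz: "\<alpha> \<noteq> 0"
    and alpha_frac: "quotient_of \<alpha> = (a, int m)"
  shows "\<exists>d' (c' :: nat \<Rightarrow> 'k poly poly).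
           d' \<le> m ^ 2 * d \<and> c' d' \<noteq> 0 \<and>
           (\<forall>n. (\<Sum>j\<le>d'. eval2 (c' j) (qvar ^ m) ((qvar ^ m) ^ n)
                    * subst_ratfun (f (n + j)) (qvar powi a)) = 0)"
proof -
  have "m > 0"
    using quotient_of_denom_pos[OF alpha_frac] by simp
  have "a \<noteq> 0"
    using quotient_of_div[OF alpha_frac] alpha_nz by auto
  obtain L A B where "\<And>j. j \<le> d \<Longrightarrow> bidegree_le (L j) A B" "L d \<noteq> 0"
    and "\<And>n. (\<Sum>j\<le>d. eval2 (L j) qvar (qvar ^ n) * subst_ratfun (f (n + j)) (qvar powi a)) = 0"
    using recurrence_after_subst_qvar_power_int[where c = c and d = d and f = f, OF \<open>a \<noteq> 0\<close> lead rec[rule_format]]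
    by blast
  then show ?thesis
    by (rule recurrence_in_powers[OF \<open>m > 0\<close>])
qed

end
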